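(* Suppose that for every $\alpha>0$ we have $pn^\alpha\to\infty$ as $n\to\infty$, and that $q\ln n\to\infty$, where $q=1-p$. Then for every $d\in\mathbb{N}$ and every $\varepsilon>0$ there exists $n_0$ such that for all $n\ge n_0$, $$u_d(n,p)\ge(2-\varepsilon)\log_{\frac{1}{1-p}}(np).$$
   Context: $G(n,p)$ is the Erdős–Rényi random graph on $n$ labelled vertices (vertex set $V$), each edge present independently with probability $p=p(n)$; $\mathbb{P}_{n,p}$ is the corresponding probability and $q=1-p$. A diameter graph in $\mathbb{R}^d$ is a graph $(V,E)$ with $V\subset\mathbb{R}^d$ finite and $E=\{\{\mathbf{x},\mathbf{y}\}\subseteq V: |\mathbf{x}-\mathbf{y}|=\operatorname{diam}V\}$, where $\operatorname{diam}V=\max_{\mathbf{x},\mathbf{y}\in V}|\mathbf{x}-\mathbf{y}|$ (Euclidean norm); a graph is a diameter graph in $\mathbb{R}^d$ if it is isomorphic to one. $u_d(n,p)$ is the largest positive integer $k$ such that $\mathbb{P}_{n,p}\big(\exists W\subseteq V,\ |W|=k,\ G[W]$ is a diameter graph in $\mathbb{R}^d$ and $\chi(G[W])=d+1\big)>\frac12$, where $G[W]$ is the induced subgraph; if no such $k$ exists, $u_d(n,p)=0$. *)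

theory Defs
  imports Complex_Main
begin

text \<open>Random graph G(n,p) on vertex set V = {0..<n}; a graph is given by its edge set,
  a set of 2-element subsets of V.\<close>

definition all_pairs :: "nat \<Rightarrow> nat set set" where
  "all_pairs n = {e. \<exists>i j. i < j \<and> j < n \<and> e = {i, j}}"

definition prob_gnp :: "nat \<Rightarrow> real \<Rightarrow> (nat set set \<Rightarrow> bool) \<Rightarrow> real" where
  "prob_gnp n p Q =
     (\<Sum>E \<in> {E. E \<subseteq> all_pairs n \<and> Q E}.
        p ^ card E * (1 - p) ^ (card (all_pairs n) - card E))"

text \<open>Points of R^d represented as functions nat \<Rightarrow> real vanishing from coordinate d on.\<close>
definition euclid :: "nat \<Rightarrow> (nat \<Rightarrow> real) set" where
  "euclid d = {x. \<forall>i\<ge>d. x i = 0}"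

definition edist :: "nat \<Rightarrow> (nat \<Rightarrow> real) \<Rightarrow> (nat \<Rightarrow> real) \<Rightarrow> real" where
  "edist d x y = sqrt (\<Sum>i<d. (x i - y i)^2)"

definition is_diameter_graph :: "nat \<Rightarrow> nat set \<Rightarrow> nat set set \<Rightarrow> bool" where
  "is_diameter_graph d W F \<longleftrightarrow> finite W \<and>
     (\<exists>f. inj_on f W \<and> f ` W \<subseteq> euclid d \<and>
        (\<forall>x\<in>W. \<forall>y\<in>W. x \<noteq> y \<longrightarrow>
           ({x, y} \<in> F \<longleftrightarrow>
              edist d (f x) (f y) = Max {edist d (f a) (f b) | a b. a \<in> W \<and> b \<in> W})))"

definition induced :: "nat set set \<Rightarrow> nat set \<Rightarrow> nat set set" where
  "induced E W = {e \<in> E. e \<subseteq> W}"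

definition chromatic_number :: "nat set \<Rightarrow> nat set set \<Rightarrow> nat" where
  "chromatic_number W F = (LEAST k. \<exists>c :: nat \<Rightarrow> nat. (\<forall>v\<in>W. c v < k) \<and>
       (\<forall>x\<in>W. \<forall>y\<in>W. x \<noteq> y \<longrightarrow> {x, y} \<in> F \<longrightarrow> c x \<noteq> c y))"

definition u_event :: "nat \<Rightarrow> nat \<Rightarrow> nat \<Rightarrow> nat set set \<Rightarrow> bool" where
  "u_event d n k E \<longleftrightarrow> (\<exists>W. W \<subseteq> {0..<n} \<and> card W = k \<and>
      is_diameter_graph d W (induced E W) \<and> chromatic_number W (induced E W) = d + 1)"

definition u :: "nat \<Rightarrow> nat \<Rightarrow> real \<Rightarrow> nat" where
  "u d n p = (let S = {k. 0 < k \<and> prob_gnp n p (u_event d n k) > 1/2}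
              in if S = {} then 0 else Max S)"

end

theory Submission
  imports Defs "HOL-Analysis.Convex" "HOL-Real_Asymp.Multiseries_Expansion"
begin

text \<open>Second moment method. Fix \<open>k \<approx> (2 - \<epsilon>) log\<^bsub>1/q\<^esub>(np)\<close> and count the pairs \<open>(W, C)\<close> with
  \<open>|W| = k\<close>, \<open>C \<subseteq> W\<close>, \<open>|C| = d + 1\<close> such that the graph induced on \<open>W\<close> is exactly the clique on \<open>C\<close>.
  Such a graph is a diameter graph in \<open>\<real>\<^sup>d\<close> with chromatic number \<open>d + 1\<close>: put \<open>C\<close> on the vertices
  of a regular simplex and the other vertices at distinct interior points of one of its edges.
  By Cauchy-Schwarz a planted pair exists with probability at least \<open>1/(1 + \<delta>)\<close>, where \<open>\<delta>\<close>
  collects the contributions of overlapping pairs; the choice of \<open>k\<close> makes \<open>\<delta> < 1\<close> for large \<open>n\<close>.\<close>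

section \<open>Edge sets and the random graph\<close>

definition pairs :: "nat set \<Rightarrow> nat set set" where
  "pairs S = {e. e \<subseteq> S \<and> card e = 2}"

lemma mem_pairs: "{x, y} \<in> pairs S \<longleftrightarrow> x \<in> S \<and> y \<in> S \<and> x \<noteq> y"
  unfolding pairs_def by (cases "x = y") auto

lemma pairsE:
  assumes "e \<in> pairs S"
  obtains x y where "e = {x, y}" "x \<in> S" "y \<in> S" "x \<noteq> y"
  using assms unfolding pairs_def by (auto simp: card_2_iff)

lemma pairs_Int: "pairs A \<inter> pairs B = pairs (A \<inter> B)"
  unfolding pairs_def by auto

lemma pairs_mono: "A \<subseteq> B \<Longrightarrow> pairs A \<subseteq> pairs B"
  unfolding pairs_def by auto

lemma finite_pairs: "finite S \<Longrightarrow> finite (pairs S)"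
  unfolding pairs_def by (rule finite_subset[of _ "Pow S"]) auto

lemma card_pairs: "finite S \<Longrightarrow> card (pairs S) = card S choose 2"
  unfolding pairs_def by (rule n_subsets)

lemma all_pairs_eq_pairs: "all_pairs n = pairs {0..<n}"
proof
  show "all_pairs n \<subseteq> pairs {0..<n}"
    unfolding all_pairs_def using mem_pairs by force
  show "pairs {0..<n} \<subseteq> all_pairs n"
  proof
    fix e assume "e \<in> pairs {0..<n}"
    then obtain x y where "e = {x, y}" "x < n" "y < n" "x \<noteq> y" by (auto elim: pairsE)
    then have "e = {min x y, max x y}" "min x y < max x y" "max x y < n"
      by (auto simp: min_def max_def insert_commute)
    then show "e \<in> all_pairs n"
      unfolding all_pairs_def by blast
  qed
qed

lemma finite_all_pairs: "finite (all_pairs n)"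
  by (simp add: all_pairs_eq_pairs finite_pairs)

lemma prob_gnp_nonneg: "0 \<le> p \<Longrightarrow> p \<le> 1 \<Longrightarrow> 0 \<le> prob_gnp n p Q"
  unfolding prob_gnp_def by (intro sum_nonneg) auto

lemma prob_gnp_mono:
  assumes "0 \<le> p" "p \<le> 1" and "\<And>E. E \<subseteq> all_pairs n \<Longrightarrow> Q E \<Longrightarrow> R E"
  shows "prob_gnp n p Q \<le> prob_gnp n p R"
  unfolding prob_gnp_def using assms finite_all_pairs
  by (intro sum_mono2) (auto intro: finite_subset[of _ "Pow (all_pairs n)"])

lemma prod_edge_weights:
  fixes p :: real
  assumes U: "finite U" and X: "X \<subseteq> U" and AB: "A \<subseteq> U" "B \<subseteq> U"
  shows "(\<Prod>e\<in>X. if e \<in> B then 0 else p) * (\<Prod>e\<in>U - X. if e \<in> A then 0 else 1 - p) =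
    (if A \<subseteq> X \<and> B \<inter> X = {} then p ^ card X * (1 - p) ^ (card U - card X) else 0)"
proof (cases "A \<subseteq> X \<and> B \<inter> X = {}")
  case True
  have "(\<Prod>e\<in>X. if e \<in> B then 0 else p) = (\<Prod>e\<in>X. p)"
    using True by (intro prod.cong) auto
  moreover have "(\<Prod>e\<in>U - X. if e \<in> A then 0 else 1 - p) = (\<Prod>e\<in>U - X. 1 - p)"
    using True by (intro prod.cong) auto
  moreover have "card (U - X) = card U - card X"
    using X U by (simp add: card_Diff_subset finite_subset)
  ultimately show ?thesis using True by simp
next
  case False
  then obtain e where "e \<in> A \<inter> (U - X) \<or> e \<in> B \<inter> X"
    using AB by auto
  then show ?thesis
    using False U X finite_subset[OF X U] by (auto intro!: prod_zero)
qed

lemma prob_gnp_contains_avoids: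
  fixes p :: real
  assumes p: "0 \<le> p" "p \<le> 1"
    and AB: "A \<subseteq> all_pairs n" "B \<subseteq> all_pairs n" "A \<inter> B = {}"
  shows "prob_gnp n p (\<lambda>E. A \<subseteq> E \<and> B \<inter> E = {}) = p ^ card A * (1 - p) ^ card B"
proof -
  define U where "U = all_pairs n"
  have U: "finite U" by (simp add: U_def finite_all_pairs)
  have "A \<subseteq> U" "B \<subseteq> U" using AB by (simp_all add: U_def)
  then have fA: "finite A" "finite B" using U by (auto intro: finite_subset)
  \<comment> \<open>Expand \<open>\<Prod>e\<in>U. present e + absent e\<close> into a sum over the possible edge sets.\<close>
  define present where "present e = (if e \<in> B then 0 else p)" for e
  define absent where "absent e = (if e \<in> A then 0 else 1 - p)" for e
  have "(\<Prod>e\<in>U. present e + absent e) = (\<Prod>e\<in>A \<union> B. present e + absent e)"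
    by (rule prod.mono_neutral_right) (use U AB in \<open>auto simp: U_def present_def absent_def\<close>)
  also have "\<dots> = (\<Prod>e\<in>A. present e + absent e) * (\<Prod>e\<in>B. present e + absent e)"
    by (rule prod.union_disjoint) (use fA AB in auto)
  also have "\<dots> = (\<Prod>e\<in>A. p) * (\<Prod>e\<in>B. 1 - p)"
    using AB(3) by (intro arg_cong2[where f = "(*)"] prod.cong) (auto simp: present_def absent_def)
  finally have prod: "(\<Prod>e\<in>U. present e + absent e) = p ^ card A * (1 - p) ^ card B"
    by simp
  have "(\<Prod>e\<in>U. present e + absent e) = (\<Sum>X\<in>Pow U. (\<Prod>e\<in>X. present e) * (\<Prod>e\<in>U - X. absent e))"
    by (rule prod_add[OF U])
  also have "\<dots> = (\<Sum>X\<in>Pow U. if A \<subseteq> X \<and> B \<inter> X = {} then p ^ card X * (1 - p) ^ (card U - card X) else 0)"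
    using prod_edge_weights[OF U _ \<open>A \<subseteq> U\<close> \<open>B \<subseteq> U\<close>]
    by (intro sum.cong) (auto simp: present_def absent_def)
  also have "\<dots> = prob_gnp n p (\<lambda>E. A \<subseteq> E \<and> B \<inter> E = {})"
    unfolding prob_gnp_def U_def[symmetric] using U
    by (simp add: sum.inter_filter[symmetric] Pow_def conj_commute)
  finally show ?thesis using prod by simp
qed

section \<open>The second moment inequality\<close>

lemma Cauchy_Schwarz_weighted_sum:
  fixes w X :: "'a \<Rightarrow> real"
  assumes "\<And>E. E \<in> S \<Longrightarrow> 0 \<le> w E"
  shows "(\<Sum>E\<in>S. w E * X E)\<^sup>2 \<le> (\<Sum>E\<in>S. w E) * (\<Sum>E\<in>S. w E * (X E)\<^sup>2)"
proof -
  have "(\<Sum>E\<in>S. w E * X E)\<^sup>2 = (\<Sum>E\<in>S. sqrt (w E) * (sqrt (w E) * X E))\<^sup>2"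
    using assms by (intro arg_cong[where f="\<lambda>x. x\<^sup>2"] sum.cong) (auto simp: real_sqrt_mult[symmetric])
  also have "\<dots> \<le> (\<Sum>E\<in>S. (sqrt (w E))\<^sup>2) * (\<Sum>E\<in>S. (sqrt (w E) * X E)\<^sup>2)"
    by (rule Cauchy_Schwarz_ineq_sum)
  also have "\<dots> = (\<Sum>E\<in>S. w E) * (\<Sum>E\<in>S. w E * (X E)\<^sup>2)"
    using assms by (intro arg_cong2[where f="(*)"] sum.cong) (auto simp: power_mult_distrib)
  finally show ?thesis .
qed

lemma second_moment_union:
  fixes w :: "'e \<Rightarrow> real" and Q :: "'i \<Rightarrow> 'e \<Rightarrow> bool"
  assumes fO: "finite \<Omega>" and fP: "finite P" and w: "\<And>E. E \<in> \<Omega> \<Longrightarrow> w E \<ge> 0"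
  shows "(\<Sum>\<pi>\<in>P. \<Sum>E\<in>{E\<in>\<Omega>. Q \<pi> E}. w E)\<^sup>2 \<le>
     (\<Sum>E\<in>{E\<in>\<Omega>. \<exists>\<pi>\<in>P. Q \<pi> E}. w E) *
     (\<Sum>\<pi>\<in>P. \<Sum>\<pi>'\<in>P. \<Sum>E\<in>{E\<in>\<Omega>. Q \<pi> E \<and> Q \<pi>' E}. w E)"
proof -
  \<comment> \<open>\<open>X\<close> counts the events occurring at \<open>E\<close>; the claim is \<open>\<bbbE>[X]\<^sup>2 \<le> \<bbbP>(X > 0) \<bbbE>[X\<^sup>2]\<close>.\<close>
  define X where "X E = (\<Sum>\<pi>\<in>P. if Q \<pi> E then 1 else 0::real)" for E
  define \<Omega>' where "\<Omega>' = {E\<in>\<Omega>. \<exists>\<pi>\<in>P. Q \<pi> E}"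
  have X0: "X E = 0" if "E \<notin> \<Omega>'" "E \<in> \<Omega>" for E
    using that by (auto simp: X_def \<Omega>'_def intro!: sum.neutral)
  have restrict: "(\<Sum>E\<in>\<Omega>. f E) = (\<Sum>E\<in>\<Omega>'. f E)"
    if "\<And>E. E \<in> \<Omega> \<Longrightarrow> E \<notin> \<Omega>' \<Longrightarrow> f E = 0" for f :: "'e \<Rightarrow> real"
    by (rule sum.mono_neutral_right) (use fO that in \<open>auto simp: \<Omega>'_def\<close>)
  have first: "(\<Sum>\<pi>\<in>P. \<Sum>E\<in>{E\<in>\<Omega>. Q \<pi> E}. w E) = (\<Sum>E\<in>\<Omega>'. w E * X E)"
  proof -
    have "(\<Sum>\<pi>\<in>P. \<Sum>E\<in>{E\<in>\<Omega>. Q \<pi> E}. w E) = (\<Sum>E\<in>\<Omega>. \<Sum>\<pi>\<in>P. if Q \<pi> E then w E else 0)"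
      using fO by (simp add: sum.inter_filter sum.swap[of _ P])
    also have "\<dots> = (\<Sum>E\<in>\<Omega>. w E * X E)"
      by (auto simp: X_def sum_distrib_left intro!: sum.cong)
    also have "\<dots> = (\<Sum>E\<in>\<Omega>'. w E * X E)"
      using X0 by (intro restrict) simp
    finally show ?thesis .
  qed
  have second: "(\<Sum>\<pi>\<in>P. \<Sum>\<pi>'\<in>P. \<Sum>E\<in>{E\<in>\<Omega>. Q \<pi> E \<and> Q \<pi>' E}. w E) = (\<Sum>E\<in>\<Omega>'. w E * (X E)\<^sup>2)"
  proof -
    have "(\<Sum>\<pi>\<in>P. \<Sum>\<pi>'\<in>P. \<Sum>E\<in>{E\<in>\<Omega>. Q \<pi> E \<and> Q \<pi>' E}. w E) =
          (\<Sum>\<pi>\<in>P. \<Sum>\<pi>'\<in>P. \<Sum>E\<in>\<Omega>. if Q \<pi> E \<and> Q \<pi>' E then w E else 0)"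
      using fO by (simp add: sum.inter_filter)
    also have "\<dots> = (\<Sum>\<pi>\<in>P. \<Sum>E\<in>\<Omega>. \<Sum>\<pi>'\<in>P. if Q \<pi> E \<and> Q \<pi>' E then w E else 0)"
      by (intro sum.cong refl sum.swap)
    also have "\<dots> = (\<Sum>E\<in>\<Omega>. \<Sum>\<pi>\<in>P. \<Sum>\<pi>'\<in>P. if Q \<pi> E \<and> Q \<pi>' E then w E else 0)"
      by (rule sum.swap)
    also have "\<dots> = (\<Sum>E\<in>\<Omega>. w E * (X E)\<^sup>2)"
      by (auto simp: X_def power2_eq_square sum_distrib_left sum_distrib_right intro!: sum.cong)
    also have "\<dots> = (\<Sum>E\<in>\<Omega>'. w E * (X E)\<^sup>2)"
      using X0 by (intro restrict) simp
    finally show ?thesis .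
  qed
  show ?thesis unfolding first second
    using Cauchy_Schwarz_weighted_sum[of \<Omega>' w X] w unfolding \<Omega>'_def by auto
qed

lemma prob_gnp_second_moment:
  fixes p :: real and Q :: "'i \<Rightarrow> nat set set \<Rightarrow> bool"
  assumes "0 \<le> p" "p \<le> 1" "finite P"
  shows "(\<Sum>\<pi>\<in>P. prob_gnp n p (Q \<pi>))\<^sup>2 \<le>
     prob_gnp n p (\<lambda>E. \<exists>\<pi>\<in>P. Q \<pi> E) * (\<Sum>\<pi>\<in>P. \<Sum>\<pi>'\<in>P. prob_gnp n p (\<lambda>E. Q \<pi> E \<and> Q \<pi>' E))"
  using second_moment_union[of "Pow (all_pairs n)" P "\<lambda>E. p ^ card E * (1 - p) ^ (card (all_pairs n) - card E)" Q]
    assms finite_all_pairs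
  by (simp add: prob_gnp_def Pow_def)

section \<open>Cliques with isolated vertices are diameter graphs\<close>

definition sqdist :: "nat \<Rightarrow> (nat \<Rightarrow> real) \<Rightarrow> (nat \<Rightarrow> real) \<Rightarrow> real" where
  "sqdist d x y = (\<Sum>i<d. (x i - y i)\<^sup>2)"

definition affine_comb :: "real \<Rightarrow> (nat \<Rightarrow> real) \<Rightarrow> (nat \<Rightarrow> real) \<Rightarrow> nat \<Rightarrow> real" where
  "affine_comb l a b = (\<lambda>i. l * a i + (1 - l) * b i)"

lemma edist_eq_sqrt_sqdist: "edist d x y = sqrt (sqdist d x y)"
  unfolding edist_def sqdist_def ..

lemma sqdist_commute: "sqdist d x y = sqdist d y x"
  unfolding sqdist_def by (simp add: power2_commute)

lemma sqdist_self [simp]: "sqdist d x x = 0"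
  unfolding sqdist_def by simp

lemma sqdist_affine_comb:
  "sqdist d (affine_comb l a b) c = l * sqdist d a c + (1 - l) * sqdist d b c - l * (1 - l) * sqdist d a b"
  unfolding sqdist_def affine_comb_def
  by (simp add: sum_distrib_left sum_subtractf[symmetric] sum.distrib[symmetric])
     (intro sum.cong refl, simp add: power2_eq_square algebra_simps)

lemma sqdist_affine_comb_affine_comb:
  "sqdist d (affine_comb l a b) (affine_comb m a b) = (l - m)\<^sup>2 * sqdist d a b"
  unfolding sqdist_def affine_comb_def
  by (simp add: sum_distrib_left) (intro sum.cong refl, simp add: power2_eq_square algebra_simps)

lemma affine_comb_in_euclid: "a \<in> euclid d \<Longrightarrow> b \<in> euclid d \<Longrightarrow> affine_comb l a b \<in> euclid d"
  unfolding affine_comb_def euclid_def by auto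

text \<open>A regular simplex with edge length \<open>\<surd>2\<close>: the unit vectors \<open>e\<^sub>0, \<dots>, e\<^bsub>d-1\<^esub>\<close> together with
  \<open>t(1, \<dots>, 1)\<close>, where the offset \<open>t\<close> solves \<open>d t\<^sup>2 - 2t - 1 = 0\<close>.\<close>

definition simplex_offset :: "nat \<Rightarrow> real" where
  "simplex_offset d = (1 - sqrt (real d + 1)) / real d"

definition simplex_vertex :: "nat \<Rightarrow> nat \<Rightarrow> nat \<Rightarrow> real" where
  "simplex_vertex d i =
     (if i < d then (\<lambda>k. if k = i then 1 else 0) else (\<lambda>k. if k < d then simplex_offset d else 0))"

definition edge_point :: "nat \<Rightarrow> real \<Rightarrow> nat \<Rightarrow> real" where
  "edge_point d l = affine_comb l (simplex_vertex d 0) (simplex_vertex d d)"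

lemma simplex_offset_eq:
  assumes "d \<ge> 1"
  shows "real d * (simplex_offset d)\<^sup>2 - 2 * simplex_offset d - 1 = 0"
proof -
  have "real d * (simplex_offset d)\<^sup>2 - 2 * simplex_offset d - 1 = ((sqrt (real d + 1))\<^sup>2 - real d - 1) / real d"
    using assms by (simp add: simplex_offset_def field_simps power2_eq_square)
  then show ?thesis by simp
qed

lemma simplex_vertex_in_euclid: "simplex_vertex d i \<in> euclid d"
  unfolding simplex_vertex_def euclid_def by auto

lemma edge_point_in_euclid: "edge_point d l \<in> euclid d"
  unfolding edge_point_def by (intro affine_comb_in_euclid simplex_vertex_in_euclid)

lemma sqdist_simplex_vertex:
  assumes d: "d \<ge> 1" and ij: "i \<le> d" "j \<le> d"
  shows "sqdist d (simplex_vertex d i) (simplex_vertex d j) = (if i = j then 0 else 2)"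
proof -
  define t where "t = simplex_offset d"
  have unit_last: "sqdist d (simplex_vertex d i) (simplex_vertex d d) = 2" if "i < d" for i
  proof -
    have "sqdist d (simplex_vertex d i) (simplex_vertex d d) = (\<Sum>k<d. (if k = i then 1 - 2 * t else 0) + t\<^sup>2)"
      unfolding sqdist_def simplex_vertex_def t_def[symmetric] using that
      by (intro sum.cong refl) (auto simp: power2_eq_square algebra_simps)
    also have "\<dots> = 1 - 2 * t + real d * t\<^sup>2" using that by (simp add: sum.distrib)
    finally show ?thesis using simplex_offset_eq[OF d] by (simp add: t_def)
  qed
  have unit_unit: "sqdist d (simplex_vertex d i) (simplex_vertex d j) = 2" if "i < d" "j < d" "i \<noteq> j" for i j
  proof -
    have "sqdist d (simplex_vertex d i) (simplex_vertex d j) = (\<Sum>k<d. (if k = i then 1 else 0) + (if k = j then 1 else 0))"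
      unfolding sqdist_def simplex_vertex_def using that by (intro sum.cong refl) auto
    then show ?thesis using that by (simp add: sum.distrib)
  qed
  consider "i = j" | "i < d" "j < d" "i \<noteq> j" | "i < d" "j = d" | "i = d" "j < d"
    using ij by linarith
  then show ?thesis
  proof cases
    case 4
    then show ?thesis using unit_last[of j] sqdist_commute[of d "simplex_vertex d j"] by simp
  qed (use unit_unit unit_last in simp_all)
qed

lemma sqdist_edge_point_simplex_vertex:
  assumes d: "d \<ge> 1" and l: "0 < l" "l < 1" and i: "i \<le> d"
  defines "s \<equiv> sqdist d (edge_point d l) (simplex_vertex d i)"
  shows "0 < s \<and> s < 2"
proof -
  have s: "s = l * sqdist d (simplex_vertex d 0) (simplex_vertex d i)
      + (1 - l) * sqdist d (simplex_vertex d d) (simplex_vertex d i) - 2 * l * (1 - l)"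
    using d by (simp add: s_def edge_point_def sqdist_affine_comb sqdist_simplex_vertex)
  consider "i = 0" | "i = d" | "0 < i" "i < d" using i d by linarith
  then show ?thesis
  proof cases
    case 1
    then have "s = 2 * (1 - l)\<^sup>2" using d by (simp add: s sqdist_simplex_vertex power2_eq_square algebra_simps)
    then show ?thesis using l by (simp add: abs_square_less_1)
  next
    case 2
    then have "s = 2 * l\<^sup>2" using d by (simp add: s sqdist_simplex_vertex power2_eq_square algebra_simps)
    then show ?thesis using l by (simp add: abs_square_less_1)
  next
    case 3
    then have "s = 2 - 2 * l * (1 - l)" using d by (simp add: s sqdist_simplex_vertex algebra_simps)
    then show ?thesis using l mult_pos_pos[of l "1 - l"] mult_strict_mono[of l 1 "1 - l" 1] by simp
  qed
qed

lemma sqdist_edge_point_edge_point: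
  assumes d: "d \<ge> 1" and lm: "0 < l" "l < 1" "0 < m" "m < 1" "l \<noteq> m"
  shows "0 < sqdist d (edge_point d l) (edge_point d m) \<and> sqdist d (edge_point d l) (edge_point d m) < 2"
proof -
  have "sqdist d (edge_point d l) (edge_point d m) = 2 * (l - m)\<^sup>2"
    using d by (simp add: edge_point_def sqdist_affine_comb_affine_comb sqdist_simplex_vertex)
  moreover have "(l - m)\<^sup>2 < 1" using lm by (simp add: abs_square_less_1)
  ultimately show ?thesis using lm by simp
qed

text \<open>The clique \<open>C\<close> goes to the vertices of the simplex and each other vertex \<open>x\<close> to the edge
  point with parameter \<open>1/(x+2)\<close>; only the simplex vertices realise the diameter \<open>\<surd>2\<close>.\<close>

lemma clique_embedding:
  fixes C W :: "nat set"
  assumes d: "d \<ge> 1" and C: "card C = d + 1"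
  obtains f where "f ` W \<subseteq> euclid d"
    and "\<And>x y. x \<noteq> y \<Longrightarrow> 0 < sqdist d (f x) (f y) \<and> sqdist d (f x) (f y) \<le> 2
           \<and> (sqdist d (f x) (f y) = 2 \<longleftrightarrow> x \<in> C \<and> y \<in> C)"
proof -
  have "finite C" using C by (simp add: card_ge_0_finite)
  then obtain g where g: "bij_betw g C {0..<d + 1}" using C ex_bij_betw_finite_nat by metis
  define lam :: "nat \<Rightarrow> real" where "lam x = 1 / (real x + 2)" for x
  define f where "f x = (if x \<in> C then simplex_vertex d (g x) else edge_point d (lam x))" for x
  have g_le: "g x \<le> d" if "x \<in> C" for x using bij_betw_apply[OF g that] by simp
  have lam: "0 < lam x" "lam x < 1" for x by (auto simp: lam_def)
  have mixed: "0 < sqdist d (f x) (f y) \<and> sqdist d (f x) (f y) < 2" if "x \<in> C" "y \<notin> C" for x y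
    using sqdist_edge_point_simplex_vertex[OF d lam[of y] g_le[OF \<open>x \<in> C\<close>]] that
      sqdist_commute[of d "f x" "f y"]
    by (simp add: f_def)
  have dist: "0 < sqdist d (f x) (f y) \<and> sqdist d (f x) (f y) \<le> 2 \<and> (sqdist d (f x) (f y) = 2 \<longleftrightarrow> x \<in> C \<and> y \<in> C)"
    if "x \<noteq> y" for x y
  proof (cases "x \<in> C"; cases "y \<in> C")
    assume "x \<in> C" "y \<in> C"
    then have "g x \<noteq> g y" using g \<open>x \<noteq> y\<close> by (auto simp: bij_betw_def inj_on_def)
    then show ?thesis using \<open>x \<in> C\<close> \<open>y \<in> C\<close> g_le d by (simp add: f_def sqdist_simplex_vertex)
  next
    assume "x \<in> C" "y \<notin> C"
    then show ?thesis using mixed[of x y] by auto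
  next
    assume "x \<notin> C" "y \<in> C"
    then show ?thesis using mixed[of y x] sqdist_commute[of d "f x"] by auto
  next
    assume "x \<notin> C" "y \<notin> C"
    moreover have "lam x \<noteq> lam y" using \<open>x \<noteq> y\<close> by (simp add: lam_def)
    ultimately show ?thesis using sqdist_edge_point_edge_point[OF d lam lam \<open>lam x \<noteq> lam y\<close>]
      by (simp add: f_def)
  qed
  have "f ` W \<subseteq> euclid d"
    by (auto simp: f_def intro!: simplex_vertex_in_euclid edge_point_in_euclid)
  then show ?thesis using dist by (rule that)
qed

lemma is_diameter_graph_pairsI:
  assumes W: "finite W" and f: "f ` W \<subseteq> euclid d"
    and C: "C \<subseteq> W" "x\<^sub>0 \<in> C" "y\<^sub>0 \<in> C" "x\<^sub>0 \<noteq> y\<^sub>0"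
    and dist: "\<And>x y. x \<in> W \<Longrightarrow> y \<in> W \<Longrightarrow> x \<noteq> y \<Longrightarrow>
      0 < sqdist d (f x) (f y) \<and> sqdist d (f x) (f y) \<le> r \<and> (sqdist d (f x) (f y) = r \<longleftrightarrow> x \<in> C \<and> y \<in> C)"
  shows "is_diameter_graph d W (pairs C)"
proof -
  have "x\<^sub>0 \<in> W" "y\<^sub>0 \<in> W" using C by auto
  then have r: "sqdist d (f x\<^sub>0) (f y\<^sub>0) = r" "r \<ge> 0" using dist[of x\<^sub>0 y\<^sub>0] C by auto
  define M where "M = {edist d (f a) (f b) | a b. a \<in> W \<and> b \<in> W}"
  have "Max M = sqrt r"
  proof (rule Max_eqI)
    have "M = (\<lambda>(a, b). edist d (f a) (f b)) ` (W \<times> W)" unfolding M_def by auto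
    then show "finite M" using W by simp
    show "sqrt r \<in> M"
      unfolding M_def edist_eq_sqrt_sqdist using \<open>x\<^sub>0 \<in> W\<close> \<open>y\<^sub>0 \<in> W\<close> r(1) by blast
    fix z assume "z \<in> M"
    then obtain a b where "z = sqrt (sqdist d (f a) (f b))" "a \<in> W" "b \<in> W"
      unfolding M_def edist_eq_sqrt_sqdist by blast
    then show "z \<le> sqrt r" using dist[of a b] \<open>r \<ge> 0\<close> by (cases "a = b") auto
  qed
  moreover have "inj_on f W"
  proof (rule inj_onI)
    fix x y assume "x \<in> W" "y \<in> W" "f x = f y"
    then show "x = y" using dist[of x y] by (metis sqdist_self less_irrefl)
  qed
  ultimately show ?thesis unfolding is_diameter_graph_def
  proof (intro conjI exI[of _ f] W f ballI impI)
    fix x y assume "x \<in> W" "y \<in> W" "x \<noteq> y"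
    then have "{x, y} \<in> pairs C \<longleftrightarrow> edist d (f x) (f y) = Max M"
      using dist[of x y] \<open>Max M = sqrt r\<close> \<open>r \<ge> 0\<close> by (simp add: mem_pairs edist_eq_sqrt_sqdist)
    then show "{x, y} \<in> pairs C \<longleftrightarrow> edist d (f x) (f y) = Max {edist d (f a) (f b) | a b. a \<in> W \<and> b \<in> W}"
      unfolding M_def .
  qed
qed

lemma is_diameter_graph_clique:
  assumes "d \<ge> 1" "finite W" "C \<subseteq> W" "card C = d + 1"
  shows "is_diameter_graph d W (pairs C)"
proof -
  obtain f where f: "f ` W \<subseteq> euclid d"
    and dist: "\<And>x y. x \<noteq> y \<Longrightarrow> 0 < sqdist d (f x) (f y) \<and> sqdist d (f x) (f y) \<le> 2
           \<and> (sqdist d (f x) (f y) = 2 \<longleftrightarrow> x \<in> C \<and> y \<in> C)"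
    using clique_embedding[OF assms(1,4)] by blast
  have "card C \<ge> 2" using assms(1,4) by simp
  then obtain S where "S \<subseteq> C" "card S = 2" by (meson obtain_subset_with_card_n)
  then obtain x\<^sub>0 y\<^sub>0 where "x\<^sub>0 \<in> C" "y\<^sub>0 \<in> C" "x\<^sub>0 \<noteq> y\<^sub>0" by (auto simp: card_2_iff)
  with assms(2,3) f dist show ?thesis by (intro is_diameter_graph_pairsI) auto
qed

lemma chromatic_number_pairs:
  assumes W: "finite W" and C: "C \<subseteq> W" "C \<noteq> {}"
  shows "chromatic_number W (pairs C) = card C"
  unfolding chromatic_number_def
proof (rule Least_equality)
  obtain g where g: "bij_betw g C {0..<card C}"
    using ex_bij_betw_finite_nat finite_subset[OF C(1) W] by blast
  define c where "c x = (if x \<in> C then g x else 0)" for x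
  show "\<exists>c::nat\<Rightarrow>nat. (\<forall>v\<in>W. c v < card C) \<and>
      (\<forall>x\<in>W. \<forall>y\<in>W. x \<noteq> y \<longrightarrow> {x, y} \<in> pairs C \<longrightarrow> c x \<noteq> c y)"
  proof (intro exI[of _ c] conjI ballI impI)
    fix v assume "v \<in> W"
    show "c v < card C"
      using bij_betw_apply[OF g] C finite_subset[OF C(1) W] by (cases "v \<in> C") (auto simp: c_def card_gt_0_iff)
  next
    fix x y assume "x \<noteq> y" "{x, y} \<in> pairs C"
    then show "c x \<noteq> c y"
      using g by (auto simp: c_def mem_pairs bij_betw_def inj_on_def)
  qed
next
  fix k assume "\<exists>c::nat\<Rightarrow>nat. (\<forall>v\<in>W. c v < k) \<and>
      (\<forall>x\<in>W. \<forall>y\<in>W. x \<noteq> y \<longrightarrow> {x, y} \<in> pairs C \<longrightarrow> c x \<noteq> c y)"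
  then obtain c :: "nat \<Rightarrow> nat" where "\<forall>v\<in>W. c v < k"
    and "\<forall>x\<in>W. \<forall>y\<in>W. x \<noteq> y \<longrightarrow> {x, y} \<in> pairs C \<longrightarrow> c x \<noteq> c y"
    by blast
  then have "inj_on c C" "c ` C \<subseteq> {..<k}" using C by (auto simp: inj_on_def mem_pairs)
  then show "card C \<le> k" using card_inj_on_le[of c C "{..<k}"] by simp
qed

section \<open>Planted cliques and their overlaps\<close>

definition ksets :: "nat \<Rightarrow> nat \<Rightarrow> nat set set" where
  "ksets n k = {W. W \<subseteq> {0..<n} \<and> card W = k}"

definition planted :: "nat \<Rightarrow> nat \<Rightarrow> nat \<Rightarrow> (nat set \<times> nat set) set" where
  "planted n k d = Sigma (ksets n k) (\<lambda>W. {C. C \<subseteq> W \<and> card C = d + 1})"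

fun planted_in :: "nat set \<times> nat set \<Rightarrow> nat set set \<Rightarrow> bool" where
  "planted_in (W, C) E \<longleftrightarrow> pairs C \<subseteq> E \<and> (pairs W - pairs C) \<inter> E = {}"

lemma finite_ksets: "finite (ksets n k)"
  unfolding ksets_def by (rule finite_subset[of _ "Pow {0..<n}"]) auto

lemma card_ksets: "card (ksets n k) = n choose k"
  unfolding ksets_def using n_subsets[of "{0..<n}" k] by simp

lemma finite_ksets_member: "W \<in> ksets n k \<Longrightarrow> finite W"
  unfolding ksets_def using finite_subset by auto

lemma card_subsets_of_ksets_member:
  assumes "W \<in> ksets n k"
  shows "card {C. C \<subseteq> W \<and> card C = j} = k choose j"
  using n_subsets[OF finite_ksets_member[OF assms], of j] assms by (simp add: ksets_def)

lemma sum_planted: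
  "(\<Sum>\<pi>\<in>planted n k d. f (fst \<pi>)) = real (k choose (d + 1)) * (\<Sum>W\<in>ksets n k. f W)"
proof -
  have "(\<Sum>\<pi>\<in>planted n k d. f (fst \<pi>)) = (\<Sum>W\<in>ksets n k. \<Sum>C\<in>{C. C \<subseteq> W \<and> card C = d + 1}. f W)"
    unfolding planted_def using finite_ksets_member
    by (subst sum.Sigma) (auto simp: finite_ksets case_prod_beta)
  also have "\<dots> = (\<Sum>W\<in>ksets n k. real (k choose (d + 1)) * f W)"
    by (intro sum.cong refl) (simp add: card_subsets_of_ksets_member)
  finally show ?thesis by (simp add: sum_distrib_left)
qed

lemma finite_planted: "finite (planted n k d)"
  unfolding planted_def using finite_ksets finite_ksets_member
  by (intro finite_SigmaI) (auto intro: finite_subset[of _ "Pow _"])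

lemma card_planted: "card (planted n k d) = (n choose k) * (k choose (d + 1))"
proof -
  have "real (card (planted n k d)) = real (k choose (d + 1)) * real (n choose k)"
    using sum_planted[of "\<lambda>_. 1" n k d] by (simp add: card_ksets)
  then have "card (planted n k d) = (k choose (d + 1)) * (n choose k)"
    by (simp only: of_nat_mult[symmetric] of_nat_eq_iff)
  then show ?thesis by (metis mult.commute)
qed

lemma u_event_if_planted:
  assumes d: "d \<ge> 1" and \<pi>: "\<pi> \<in> planted n k d" and E: "E \<subseteq> all_pairs n" "planted_in \<pi> E"
  shows "u_event d n k E"
proof -
  obtain W C where \<pi>: "\<pi> = (W, C)" "W \<subseteq> {0..<n}" "card W = k" "C \<subseteq> W" "card C = d + 1"
    using \<pi> unfolding planted_def ksets_def by auto
  have "finite W" using \<pi> finite_subset by auto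
  have planted: "pairs C \<subseteq> E" "(pairs W - pairs C) \<inter> E = {}" using E(2) \<pi>(1) by auto
  have induced: "induced E W = pairs C"
  proof
    show "induced E W \<subseteq> pairs C"
    proof
      fix e assume e: "e \<in> induced E W"
      then have "e \<in> pairs {0..<n}" using E all_pairs_eq_pairs by (auto simp: induced_def)
      then have "e \<in> pairs W" using e by (simp add: pairs_def induced_def)
      then show "e \<in> pairs C" using planted e by (auto simp: induced_def)
    qed
    show "pairs C \<subseteq> induced E W"
      using planted pairs_mono[OF \<pi>(4)] unfolding induced_def by (auto simp: pairs_def)
  qed
  have "C \<noteq> {}" using \<pi>(5) by auto
  show ?thesis unfolding u_event_def
  proof (intro exI[of _ W] conjI)
    show "is_diameter_graph d W (induced E W)"
      unfolding induced by (rule is_diameter_graph_clique[OF d \<open>finite W\<close> \<pi>(4,5)])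
    show "chromatic_number W (induced E W) = d + 1"
      unfolding induced using chromatic_number_pairs[OF \<open>finite W\<close> \<pi>(4) \<open>C \<noteq> {}\<close>] \<pi>(5) by simp
  qed (use \<pi> in auto)
qed

lemma planted_pairs:
  assumes "(W, C) \<in> planted n k d"
  shows "finite W" "finite (pairs W)" "finite (pairs C)" "pairs C \<subseteq> pairs W" "pairs W \<subseteq> all_pairs n"
    "card (pairs C) = (d + 1) choose 2" "card (pairs W - pairs C) = (k choose 2) - ((d + 1) choose 2)"
proof -
  have W: "W \<in> ksets n k" "C \<subseteq> W" "card C = d + 1" using assms by (auto simp: planted_def)
  show "finite W" using finite_ksets_member[OF W(1)] .
  then have "finite C" using W(2) finite_subset by blast
  show "finite (pairs W)" "finite (pairs C)" using \<open>finite W\<close> \<open>finite C\<close> by (simp_all add: finite_pairs)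
  show "pairs C \<subseteq> pairs W" "pairs W \<subseteq> all_pairs n"
    using W pairs_mono by (auto simp: all_pairs_eq_pairs ksets_def)
  show "card (pairs C) = (d + 1) choose 2" using \<open>finite C\<close> W by (simp add: card_pairs)
  then show "card (pairs W - pairs C) = (k choose 2) - ((d + 1) choose 2)"
    using \<open>finite W\<close> \<open>finite (pairs C)\<close> \<open>pairs C \<subseteq> pairs W\<close> W
    by (simp add: card_Diff_subset card_pairs ksets_def)
qed

lemma prob_planted_in:
  fixes p :: real
  assumes p: "0 \<le> p" "p \<le> 1" and \<pi>: "\<pi> \<in> planted n k d"
  shows "prob_gnp n p (planted_in \<pi>) = p ^ ((d + 1) choose 2) * (1 - p) ^ ((k choose 2) - ((d + 1) choose 2))"
proof -
  obtain W C where \<pi>_eq: "\<pi> = (W, C)" by fastforce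
  note P = planted_pairs[OF \<pi>[unfolded \<pi>_eq]]
  have "prob_gnp n p (planted_in (W, C)) = p ^ card (pairs C) * (1 - p) ^ card (pairs W - pairs C)"
    unfolding planted_in.simps using P by (intro prob_gnp_contains_avoids p) auto
  then show ?thesis using P by (simp add: \<pi>_eq)
qed

lemma binomial_diff_le:
  assumes "i \<le> k" "k \<le> n"
  shows "real (n choose (k - i)) \<le> real (n choose k) * (real k / real (n - k + 1)) ^ i"
  using assms(1)
proof (induction i)
  case 0
  then show ?case by simp
next
  case (Suc i)
  define r where "r = k - Suc i"
  have r: "Suc r = k - i" "r < n" "Suc r \<le> k" using Suc.prems assms(2) by (auto simp: r_def)
  have "(n choose Suc r) * Suc r = (n choose r) * (n - r)"
    by (metis binomial_absorb_comp binomial_absorption mult.commute)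
  then have "real (n choose r) * real (n - r) = real (n choose Suc r) * real (Suc r)"
    by (metis of_nat_mult)
  then have "real (n choose r) = real (n choose Suc r) * (real (Suc r) / real (n - r))"
    using r by (simp add: field_simps)
  also have "\<dots> \<le> real (n choose Suc r) * (real k / real (n - k + 1))"
    using r by (intro mult_left_mono frac_le) auto
  also have "\<dots> \<le> real (n choose k) * (real k / real (n - k + 1)) ^ i * (real k / real (n - k + 1))"
    using Suc r by (intro mult_right_mono) auto
  finally show ?case by (simp add: r_def mult_ac)
qed

lemma binomial_overlap_le:
  assumes "j \<le> k" "k \<le> n"
  shows "real (k choose j) * real ((n - k) choose (k - j)) \<le> real (n choose k) * (real k ^ 2 / real (n - k + 1)) ^ j"
proof -
  have "real (k choose j) * real ((n - k) choose (k - j)) \<le> real k ^ j * real (n choose (k - j))"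
    using binomial_le_pow[OF assms(1)] binomial_right_mono[of "n - k" n "k - j"]
    by (intro mult_mono) (auto simp flip: of_nat_power)
  also have "\<dots> \<le> real k ^ j * (real (n choose k) * (real k / real (n - k + 1)) ^ j)"
    by (intro mult_left_mono binomial_diff_le assms) auto
  also have "\<dots> = real (n choose k) * (real k ^ 2 / real (n - k + 1)) ^ j"
    by (simp add: power_divide power2_eq_square power_mult_distrib)
  finally show ?thesis .
qed

lemma card_ksets_overlap_le:
  assumes W: "W \<in> ksets n k"
  shows "card {W' \<in> ksets n k. card (W \<inter> W') = j} \<le> (k choose j) * ((n - k) choose (k - j))"
proof -
  define T where "T = {S. S \<subseteq> W \<and> card S = j} \<times> {S. S \<subseteq> {0..<n} - W \<and> card S = k - j}"
  have fW: "finite W" using finite_ksets_member[OF W] .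
  have "card T = (k choose j) * ((n - k) choose (k - j))"
    unfolding T_def card_cartesian_product using fW W
    by (simp add: n_subsets card_Diff_subset ksets_def)
  moreover have "card {W' \<in> ksets n k. card (W \<inter> W') = j} \<le> card T"
  proof (rule card_inj_on_le[where f = "\<lambda>W'. (W \<inter> W', W' - W)"])
    show "inj_on (\<lambda>W'. (W \<inter> W', W' - W)) {W' \<in> ksets n k. card (W \<inter> W') = j}"
      by (rule inj_onI) (metis Int_Diff_Un Int_commute prod.inject)
    show "(\<lambda>W'. (W \<inter> W', W' - W)) ` {W' \<in> ksets n k. card (W \<inter> W') = j} \<subseteq> T"
    proof clarify
      fix W' assume W': "W' \<in> ksets n k" "j = card (W \<inter> W')"
      have "card (W' - W) = card W' - card (W' \<inter> W)"
        using finite_ksets_member[OF W'(1)] by (simp add: card_Diff_subset_Int)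
      then show "(W \<inter> W', W' - W) \<in> T"
        unfolding T_def using W' by (auto simp: ksets_def Int_commute)
    qed
    show "finite T" unfolding T_def using fW by auto
  qed
  ultimately show ?thesis by simp
qed

text \<open>Two planted sets sharing at most one vertex have no potential edge in common, so their
  events are independent and the overlap factor is \<open>1\<close>.\<close>

definition overlap_factor :: "real \<Rightarrow> nat \<Rightarrow> nat \<Rightarrow> real" where
  "overlap_factor p a j = (if j \<le> 1 then 1 else 1 / (p ^ a * (1 - p) ^ (j choose 2)))"

text \<open>\<open>delta\<close> bounds the relative excess of the second moment of the number of planted patterns over
  its squared mean; the \<open>j\<close>-th term accounts for pairs of \<open>k\<close>-sets meeting in \<open>j\<close> vertices.\<close>

definition delta :: "nat \<Rightarrow> nat \<Rightarrow> real \<Rightarrow> nat \<Rightarrow> real" where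
  "delta n k p d = (\<Sum>j\<in>{2..k}. real (k choose j) * real ((n - k) choose (k - j)) /
      (real (n choose k) * p ^ ((d + 1) choose 2) * (1 - p) ^ (j choose 2)))"

lemma delta_nonneg: "0 \<le> p \<Longrightarrow> p \<le> 1 \<Longrightarrow> 0 \<le> delta n k p d"
  unfolding delta_def by (intro sum_nonneg) auto

lemma card_Un_Diff_superset:
  assumes "finite X" "finite Y" "X \<subseteq> Z"
  shows "card (X \<union> (Y - Z)) = card X + (card Y - card (Y \<inter> Z))"
  using assms by (subst card_Un_disjoint) (auto simp: card_Diff_subset_Int)

lemma power_overlap_le:
  fixes p :: real
  assumes p: "0 < p" "p < 1" and st: "s + t = j choose 2" "t \<le> M"
  shows "p ^ (a + (a - s)) * (1 - p) ^ (M + (M - t)) \<le> (p ^ a * (1 - p) ^ M)\<^sup>2 * overlap_factor p a j"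
proof (cases "j \<le> 1")
  case True
  then have "s = 0" "t = 0" using st by (simp_all add: binomial_eq_0)
  then show ?thesis using True by (simp add: overlap_factor_def power_add power2_eq_square)
next
  case False
  have "p ^ (a + (a - s)) \<le> p ^ a" using p by (intro power_decreasing) auto
  moreover have "(1 - p) ^ (M + (M - t)) * (1 - p) ^ (j choose 2) \<le> (1 - p) ^ M * (1 - p) ^ M"
    unfolding power_add[symmetric] using p st by (intro power_decreasing) auto
  ultimately have "p ^ (a + (a - s)) * (1 - p) ^ (M + (M - t)) \<le> p ^ a * ((1 - p) ^ M * (1 - p) ^ M / (1 - p) ^ (j choose 2))"
    using p by (intro mult_mono) (auto simp: field_simps)
  also have "\<dots> = (p ^ a * (1 - p) ^ M)\<^sup>2 * overlap_factor p a j"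
    using False p by (simp add: overlap_factor_def power2_eq_square field_simps)
  finally show ?thesis .
qed

lemma prob_planted_in_both:
  fixes p :: real
  assumes p: "0 < p" "p < 1" and \<pi>: "\<pi> \<in> planted n k d" and \<pi>': "\<pi>' \<in> planted n k d"
  defines "a \<equiv> (d + 1) choose 2"
  shows "prob_gnp n p (\<lambda>E. planted_in \<pi> E \<and> planted_in \<pi>' E)
    \<le> (p ^ a * (1 - p) ^ ((k choose 2) - a))\<^sup>2 * overlap_factor p a (card (fst \<pi> \<inter> fst \<pi>'))"
proof -
  obtain W C W' C' where \<pi>: "\<pi> = (W, C)" and \<pi>': "\<pi>' = (W', C')" by fastforce
  have "(W, C) \<in> planted n k d" "(W', C') \<in> planted n k d" using assms(3,4) \<pi> \<pi>' by simp_all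
  note P = planted_pairs[OF this(1)] and P' = planted_pairs[OF this(2)]
  define M where "M = (k choose 2) - a"
  define s where "s = card (pairs C' \<inter> pairs W)"
  define t where "t = card ((pairs W' - pairs C') \<inter> pairs W)"
  have fin_pairs: "finite (pairs W)" "finite (pairs W')" "finite (pairs C)" "finite (pairs C')"
    and sub: "pairs C \<subseteq> pairs W" "pairs C' \<subseteq> pairs W'" "pairs W \<subseteq> all_pairs n" "pairs W' \<subseteq> all_pairs n"
    and card_C: "card (pairs C) = a" "card (pairs C') = a"
    and card_W_C: "card (pairs W - pairs C) = M" "card (pairs W' - pairs C') = M"
    using P P' by (simp_all add: a_def M_def)
  have "s + t = card (pairs W' \<inter> pairs W)"
    unfolding s_def t_def using sub fin_pairs by (subst card_Un_disjoint[symmetric]) (auto intro!: arg_cong[where f = card])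
  also have "\<dots> = card (W \<inter> W') choose 2"
    using P(1) by (simp add: pairs_Int Int_commute card_pairs)
  finally have st: "s + t = card (W \<inter> W') choose 2" .
  have "t \<le> M" unfolding t_def card_W_C(2)[symmetric] using fin_pairs by (intro card_mono) auto
  \<comment> \<open>Forget the non-edges of \<open>W'\<close> that lie inside \<open>W\<close>: what remains is a contain/avoid event.\<close>
  define A where "A = pairs C \<union> (pairs C' - pairs W)"
  define B where "B = (pairs W - pairs C) \<union> ((pairs W' - pairs C') - pairs W)"
  have "prob_gnp n p (\<lambda>E. planted_in \<pi> E \<and> planted_in \<pi>' E) \<le> prob_gnp n p (\<lambda>E. A \<subseteq> E \<and> B \<inter> E = {})"
    using p unfolding \<pi> \<pi>' A_def B_def by (intro prob_gnp_mono) auto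
  also have "\<dots> = p ^ card A * (1 - p) ^ card B"
    using p sub unfolding A_def B_def by (intro prob_gnp_contains_avoids) auto
  also have "card A = a + (a - s)"
    unfolding A_def s_def using fin_pairs sub card_C by (simp add: card_Un_Diff_superset)
  also have "card B = M + (M - t)"
    unfolding B_def t_def using fin_pairs card_W_C by (simp add: card_Un_Diff_superset)
  also have "p ^ (a + (a - s)) * (1 - p) ^ (M + (M - t)) \<le> (p ^ a * (1 - p) ^ M)\<^sup>2 * overlap_factor p a (card (W \<inter> W'))"
    using p st \<open>t \<le> M\<close> by (rule power_overlap_le)
  finally show ?thesis unfolding \<pi> \<pi>' M_def by simp
qed

lemma sum_ksets_by_overlap_le:
  assumes W: "W \<in> ksets n k" and h: "\<And>j. 0 \<le> h j"
  shows "(\<Sum>W'\<in>ksets n k. h (card (W \<inter> W'))) \<le> (\<Sum>j\<le>k. real ((k choose j) * ((n - k) choose (k - j))) * h j)"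
proof -
  have "card (W \<inter> W') \<le> k" if "W' \<in> ksets n k" for W'
    using W card_mono[OF finite_ksets_member[OF W], of "W \<inter> W'"] by (auto simp: ksets_def)
  then have "(\<Sum>W'\<in>ksets n k. h (card (W \<inter> W'))) = (\<Sum>j\<le>k. \<Sum>W'\<in>{W' \<in> ksets n k. card (W \<inter> W') = j}. h (card (W \<inter> W')))"
    by (intro sum.group[symmetric] finite_ksets) auto
  also have "\<dots> = (\<Sum>j\<le>k. real (card {W' \<in> ksets n k. card (W \<inter> W') = j}) * h j)"
    by (intro sum.cong) auto
  also have "\<dots> \<le> (\<Sum>j\<le>k. real ((k choose j) * ((n - k) choose (k - j))) * h j)"
    using card_ksets_overlap_le[OF W] by (intro sum_mono mult_right_mono h) (simp only: of_nat_le_iff)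
  finally show ?thesis .
qed

lemma sum_overlap_factor_le:
  fixes p :: real
  assumes p: "0 < p" "p < 1" and W: "W \<in> ksets n k" and kn: "k \<le> n"
  shows "(\<Sum>W'\<in>ksets n k. overlap_factor p ((d + 1) choose 2) (card (W \<inter> W'))) \<le> real (n choose k) * (1 + delta n k p d)"
proof -
  define a where "a = (d + 1) choose 2"
  define h where "h j = (if j \<le> 1 then 0 else 1 / (p ^ a * (1 - p) ^ (j choose 2)))" for j
  have h: "0 \<le> h j" for j using p by (simp add: h_def)
  have "(\<Sum>W'\<in>ksets n k. overlap_factor p a (card (W \<inter> W'))) \<le> (\<Sum>W'\<in>ksets n k. 1 + h (card (W \<inter> W')))"
    by (intro sum_mono) (simp add: overlap_factor_def h_def)
  also have "\<dots> = real (n choose k) + (\<Sum>W'\<in>ksets n k. h (card (W \<inter> W')))"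
    by (simp add: sum.distrib card_ksets)
  also have "(\<Sum>W'\<in>ksets n k. h (card (W \<inter> W'))) \<le> (\<Sum>j\<le>k. real ((k choose j) * ((n - k) choose (k - j))) * h j)"
    by (rule sum_ksets_by_overlap_le[OF W h])
  also have "\<dots> = (\<Sum>j\<in>{2..k}. real ((k choose j) * ((n - k) choose (k - j))) * h j)"
    by (rule sum.mono_neutral_right) (auto simp: h_def)
  also have "\<dots> = real (n choose k) * delta n k p d"
    unfolding delta_def sum_distrib_left using kn by (intro sum.cong) (auto simp: h_def a_def)
  finally show ?thesis unfolding a_def by (simp add: algebra_simps)
qed

lemma second_moment_planted_le:
  fixes p :: real and d :: nat
  assumes p: "0 < p" "p < 1" and kn: "k \<le> n"
  defines "P \<equiv> p ^ ((d + 1) choose 2) * (1 - p) ^ ((k choose 2) - ((d + 1) choose 2))"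
  shows "(\<Sum>\<pi>\<in>planted n k d. \<Sum>\<pi>'\<in>planted n k d. prob_gnp n p (\<lambda>E. planted_in \<pi> E \<and> planted_in \<pi>' E))
    \<le> (real (card (planted n k d)) * P)\<^sup>2 * (1 + delta n k p d)"
proof -
  define g where "g \<pi> = (\<Sum>\<pi>'\<in>planted n k d. overlap_factor p ((d + 1) choose 2) (card (fst \<pi> \<inter> fst \<pi>')))"
    for \<pi> :: "nat set \<times> nat set"
  have "(\<Sum>\<pi>\<in>planted n k d. \<Sum>\<pi>'\<in>planted n k d. prob_gnp n p (\<lambda>E. planted_in \<pi> E \<and> planted_in \<pi>' E))
      \<le> (\<Sum>\<pi>\<in>planted n k d. P\<^sup>2 * g \<pi>)"
    unfolding g_def sum_distrib_left P_def using prob_planted_in_both[OF p] by (intro sum_mono) auto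
  also have "\<dots> \<le> (\<Sum>\<pi>\<in>planted n k d. P\<^sup>2 * (real (k choose (d + 1)) * (real (n choose k) * (1 + delta n k p d))))"
  proof (intro sum_mono mult_left_mono)
    fix \<pi> assume "\<pi> \<in> planted n k d"
    then have "fst \<pi> \<in> ksets n k" by (auto simp: planted_def)
    moreover have "g \<pi> = real (k choose (d + 1)) *
        (\<Sum>W'\<in>ksets n k. overlap_factor p ((d + 1) choose 2) (card (fst \<pi> \<inter> W')))"
      unfolding g_def by (rule sum_planted)
    ultimately show "g \<pi> \<le> real (k choose (d + 1)) * (real (n choose k) * (1 + delta n k p d))"
      using sum_overlap_factor_le[OF p _ kn, of "fst \<pi>" d] by (simp add: mult_left_mono)
  qed simp
  also have "\<dots> = (real (card (planted n k d)) * P)\<^sup>2 * (1 + delta n k p d)"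
    by (simp add: card_planted power2_eq_square algebra_simps)
  finally show ?thesis .
qed

lemma prob_u_event_gt_half:
  fixes p :: real
  assumes p: "0 < p" "p < 1" and d: "d \<ge> 1" and k: "d + 1 \<le> k" "k \<le> n" and delta: "delta n k p d < 1"
  shows "prob_gnp n p (u_event d n k) > 1 / 2"
proof -
  define P where "P = p ^ ((d + 1) choose 2) * (1 - p) ^ ((k choose 2) - ((d + 1) choose 2))"
  define N where "N = real (card (planted n k d))"
  define Pr where "Pr = prob_gnp n p (\<lambda>E. \<exists>\<pi>\<in>planted n k d. planted_in \<pi> E)"
  have "N * P > 0" using p k by (simp add: N_def P_def card_planted)
  have "(\<Sum>\<pi>\<in>planted n k d. prob_gnp n p (planted_in \<pi>)) = N * P"
    using prob_planted_in[of p] p by (simp add: N_def P_def)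
  then have "(N * P)\<^sup>2 \<le> Pr * (\<Sum>\<pi>\<in>planted n k d. \<Sum>\<pi>'\<in>planted n k d. prob_gnp n p (\<lambda>E. planted_in \<pi> E \<and> planted_in \<pi>' E))"
    using prob_gnp_second_moment[where P = "planted n k d" and Q = planted_in and n = n and p = p] p finite_planted
    unfolding Pr_def by simp
  also have "\<dots> \<le> Pr * ((N * P)\<^sup>2 * (1 + delta n k p d))"
    using second_moment_planted_le[OF p k(2), of d] prob_gnp_nonneg[of p] p
    unfolding Pr_def N_def P_def by (intro mult_left_mono) auto
  finally have "(N * P)\<^sup>2 * 1 \<le> (N * P)\<^sup>2 * (Pr * (1 + delta n k p d))"
    by (simp add: mult_ac)
  then have "1 \<le> Pr * (1 + delta n k p d)"
    using \<open>N * P > 0\<close> by (simp only: mult_le_cancel_left_pos zero_less_power)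
  moreover have "0 \<le> delta n k p d" using delta_nonneg[of p n k d] p by simp
  ultimately have "0 < Pr" by (smt (verit) mult_nonpos_nonneg)
  then have "Pr * (1 + delta n k p d) < Pr * 2" using delta by simp
  with \<open>1 \<le> Pr * (1 + delta n k p d)\<close> have "Pr > 1 / 2" by linarith
  also have "Pr \<le> prob_gnp n p (u_event d n k)"
    unfolding Pr_def using p u_event_if_planted[OF d] by (intro prob_gnp_mono) auto
  finally show ?thesis .
qed

section \<open>Asymptotics\<close>

lemma real_choose_two: "real (j choose 2) = real j * (real j - 1) / 2"
proof (induction j)
  case (Suc j)
  have "Suc j choose 2 = j + (j choose 2)"
    by (simp add: numeral_2_eq_2 choose_reduce_nat)
  then show ?case using Suc by (simp add: field_simps)
qed simp

lemma power_choose_two_le: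
  fixes b :: real
  assumes b: "1 \<le> b" and j: "j \<le> k"
  shows "b ^ (j choose 2) \<le> (b powr ((real k - 1) / 2)) ^ j"
proof -
  have "b ^ (j choose 2) = b powr real (j choose 2)"
    using b by (simp add: powr_realpow)
  also have "\<dots> \<le> b powr (real j * ((real k - 1) / 2))"
  proof (rule powr_mono[OF _ b])
    have "real j * (real j - 1) \<le> real j * (real k - 1)" using j by (intro mult_left_mono) auto
    then show "real (j choose 2) \<le> real j * ((real k - 1) / 2)" by (simp add: real_choose_two)
  qed
  also have "\<dots> = (b powr ((real k - 1) / 2)) ^ j"
    using b by (simp add: powr_power)
  finally show ?thesis .
qed

lemma delta_le:
  fixes p :: real
  assumes p: "0 < p" "p < 1" and k: "2 \<le> k" "k \<le> n"
  defines "\<rho> \<equiv> real k ^ 2 / real (n - k + 1) * (1 / (1 - p)) powr ((real k - 1) / 2)"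
  assumes \<rho>: "\<rho> \<le> 1"
  shows "delta n k p d \<le> real k * \<rho>\<^sup>2 / p ^ ((d + 1) choose 2)"
proof -
  define a where "a = (d + 1) choose 2"
  define r where "r = real k ^ 2 / real (n - k + 1)"
  define B where "B = (1 / (1 - p)) powr ((real k - 1) / 2)"
  have pos: "0 \<le> r" "0 \<le> B" "0 < p ^ a" "0 < real (n choose k)" using p k by (auto simp: r_def B_def)
  have "\<rho> = r * B" by (simp add: \<rho>_def r_def B_def)
  have summand: "real (k choose j) * real ((n - k) choose (k - j)) / (real (n choose k) * p ^ a * (1 - p) ^ (j choose 2))
      \<le> \<rho>\<^sup>2 / p ^ a" if j: "j \<in> {2..k}" for j
  proof -
    have "real (k choose j) * real ((n - k) choose (k - j)) / (real (n choose k) * p ^ a * (1 - p) ^ (j choose 2))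
        = (real (k choose j) * real ((n - k) choose (k - j)) / real (n choose k)) * (1 / (1 - p)) ^ (j choose 2) / p ^ a"
      using p by (simp add: field_simps power_one_over)
    also have "\<dots> \<le> r ^ j * B ^ j / p ^ a"
    proof (intro divide_right_mono mult_mono)
      show "real (k choose j) * real ((n - k) choose (k - j)) / real (n choose k) \<le> r ^ j"
        using binomial_overlap_le[of j k n] j k pos by (simp add: r_def divide_le_eq mult.commute)
      show "(1 / (1 - p)) ^ (j choose 2) \<le> B ^ j"
        unfolding B_def using p j by (intro power_choose_two_le) auto
    qed (use pos p in auto)
    also have "\<dots> \<le> \<rho>\<^sup>2 / p ^ a"
      unfolding \<open>\<rho> = r * B\<close> power_mult_distrib[symmetric]
      using j \<rho> pos \<open>\<rho> = r * B\<close> by (intro divide_right_mono power_decreasing) auto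
    finally show ?thesis .
  qed
  have "delta n k p d \<le> (\<Sum>j\<in>{2..k}. \<rho>\<^sup>2 / p ^ a)"
    unfolding delta_def a_def[symmetric] using summand by (intro sum_mono)
  also have "\<dots> = real (k - 1) * (\<rho>\<^sup>2 / p ^ a)"
    using k by simp
  also have "\<dots> \<le> real k * (\<rho>\<^sup>2 / p ^ a)"
    using pos by (intro mult_right_mono) auto
  finally show ?thesis by (simp add: a_def)
qed

lemma le_u_if_prob_gt_half:
  assumes "0 < k" "prob_gnp n p (u_event d n k) > 1 / 2"
  shows "k \<le> u d n p"
proof -
  define S where "S = {k. 0 < k \<and> prob_gnp n p (u_event d n k) > 1 / 2}"
  have "S \<subseteq> {..n}"
  proof
    fix k' assume k': "k' \<in> S"
    have "u_event d n k' E \<Longrightarrow> k' \<le> n" for E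
      unfolding u_event_def using card_mono[of "{0..<n}"] by force
    then have "k' \<le> n" using k' unfolding S_def prob_gnp_def by fastforce
    then show "k' \<in> {..n}" by simp
  qed
  then have "finite S" using finite_subset by blast
  moreover have "k \<in> S" using assms by (simp add: S_def)
  ultimately show ?thesis unfolding u_def S_def[symmetric] Let_def by auto
qed

lemma gnp_regime:
  fixes p x \<beta> :: real
  assumes \<beta>: "0 < \<beta>" "\<beta> \<le> 1 / 2" and x: "0 \<le> x" and p: "p \<le> 1"
    and p_large: "1 \<le> p * x powr \<beta>" and q_large: "1 \<le> (1 - p) * ln x"
  shows "1 < x" "0 < p" "p < 1" "1 / p \<le> x powr \<beta>" "x powr (1 / 2) \<le> x * p"
proof -
  have "0 < ln x" using q_large p by (smt (verit) mult_nonneg_nonpos)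
  then have "x \<noteq> 0" by auto
  then show x1: "1 < x" using x ln_gt_zero_iff \<open>0 < ln x\<close> by auto
  show p0: "0 < p" using p_large x by (smt (verit) mult_nonpos_nonneg powr_ge_zero)
  show "p < 1" using q_large by (smt (verit) mult_nonpos_nonneg \<open>0 < ln x\<close>)
  show "1 / p \<le> x powr \<beta>" using p_large p0 by (simp add: field_simps)
  have "x powr (1 / 2) = x powr (1 - \<beta>) * x powr (\<beta> - 1 / 2)" by (simp flip: powr_add)
  also have "\<dots> \<le> x powr (1 - \<beta>)"
    using x1 \<beta> powr_mono[of "\<beta> - 1 / 2" 0 x] by (intro mult_left_le) auto
  also have "\<dots> = x / x powr \<beta>" using x1 by (simp add: powr_diff)
  also have "\<dots> \<le> x * p" using \<open>1 / p \<le> x powr \<beta>\<close> x1 p0 by (simp add: field_simps)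
  finally show "x powr (1 / 2) \<le> x * p" .
qed

lemma log_np_lower:
  fixes p x :: real
  assumes x: "1 < x" and p: "0 < p" and np: "x powr (1 / 2) \<le> x * p" and q_large: "1 \<le> (1 - p) * ln x"
  shows "sqrt (ln x) / 4 \<le> log (1 / (1 - p)) (x * p)"
proof -
  have lnx: "1 \<le> ln x" using q_large p by (smt (verit) mult_le_cancel_right1 ln_gt_zero_iff x)
  have p1: "p < 1" using q_large lnx by (smt (verit) mult_nonpos_nonneg)
  define b where "b = 1 / (1 - p)"
  have b: "1 < b" "b \<le> ln x" using p p1 q_large by (auto simp: b_def field_simps)
  have "ln x / 2 = ln (x powr (1 / 2))" using x by (simp add: ln_powr)
  also have "\<dots> \<le> ln (x * p)" using np x by (intro ln_mono) auto
  finally have num: "ln x / 2 \<le> ln (x * p)" .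
  have "ln b \<le> ln (ln x)" using b by simp
  also have "\<dots> \<le> ln x powr (1 / 2) / (1 / 2)" using lnx by (intro ln_powr_bound) auto
  finally have den: "ln b \<le> 2 * sqrt (ln x)" using lnx by (simp add: powr_half_sqrt)
  have "sqrt (ln x) / 4 = (ln x / 2) / (2 * sqrt (ln x))"
    using lnx by (simp add: field_simps flip: real_sqrt_mult)
  also have "\<dots> \<le> ln (x * p) / ln b" using num den b lnx by (intro frac_le) auto
  finally show ?thesis by (simp add: log_def b_def)
qed

lemma log_np_upper:
  fixes p x \<beta> :: real
  assumes \<beta>: "0 < \<beta>" and x: "1 < x" and p: "0 < p" "p < 1" "1 / p \<le> x powr \<beta>" and np: "1 \<le> x * p"
  shows "log (1 / (1 - p)) (x * p) \<le> x powr (2 * \<beta>) / \<beta>"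
proof -
  have "p \<le> ln (1 / (1 - p))"
    using ln_one_minus_pos_upper_bound[of p] p by (simp add: ln_div)
  moreover have "ln (x * p) \<le> ln x" using p np x by (intro ln_mono) (auto simp: mult_left_le)
  ultimately have "log (1 / (1 - p)) (x * p) \<le> ln x / p"
    unfolding log_def using p np x by (intro frac_le) auto
  also have "\<dots> = ln x * (1 / p)" by simp
  also have "\<dots> \<le> (x powr \<beta> / \<beta>) * x powr \<beta>"
    using ln_powr_bound[of x \<beta>] x \<beta> p by (intro mult_mono) auto
  also have "\<dots> = x powr (2 * \<beta>) / \<beta>" by (simp flip: powr_add)
  finally show ?thesis .
qed

lemma powr_le_powr_log:
  fixes b y x r \<theta> :: real
  assumes "1 < b" "1 \<le> y" "y \<le> x" "r \<le> \<theta> * log b y" "0 \<le> \<theta>"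
  shows "b powr r \<le> x powr \<theta>"
proof -
  have "b powr r \<le> b powr (log b y * \<theta>)" using assms by (intro powr_mono) (auto simp: mult.commute)
  also have "\<dots> = y powr \<theta>" using assms by (simp add: powr_powr[symmetric])
  also have "\<dots> \<le> x powr \<theta>" using assms by (intro powr_mono2) auto
  finally show ?thesis .
qed

lemma planted_size_bounds:
  fixes \<epsilon> \<beta> x L :: real
  assumes eps: "0 < \<epsilon>" "\<epsilon> \<le> 1" and \<beta>: "0 < \<beta>" "\<beta> \<le> 1" and x: "1 < x"
    and L: "0 \<le> L" "L \<le> x powr (2 * \<beta>) / \<beta>"
  defines "k \<equiv> nat \<lceil>(2 - \<epsilon>) * L\<rceil>"
  shows "(2 - \<epsilon>) * L \<le> real k" "(real k - 1) / 2 \<le> (1 - \<epsilon> / 2) * L"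
    "real k \<le> 3 / \<beta> * x powr (2 * \<beta>)"
proof -
  have kL: "(2 - \<epsilon>) * L \<le> real k" "real k < (2 - \<epsilon>) * L + 1"
    using L eps ceiling_correct[of "(2 - \<epsilon>) * L"] by (auto simp: k_def)
  then show "(2 - \<epsilon>) * L \<le> real k" "(real k - 1) / 2 \<le> (1 - \<epsilon> / 2) * L"
    by (auto simp: field_simps)
  have "1 \<le> x powr (2 * \<beta>) / \<beta>" using x \<beta> ge_one_powr_ge_zero[of x "2 * \<beta>"] by (simp add: field_simps)
  have "0 \<le> \<epsilon> * L" using eps L by simp
  then have "real k \<le> 2 * L + 1" using kL by (simp add: left_diff_distrib)
  also have "\<dots> \<le> 2 * (x powr (2 * \<beta>) / \<beta>) + x powr (2 * \<beta>) / \<beta>"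
    using L \<open>1 \<le> x powr (2 * \<beta>) / \<beta>\<close> by linarith
  finally show "real k \<le> 3 / \<beta> * x powr (2 * \<beta>)" by simp
qed

lemma overlap_ratio_le:
  fixes B c \<beta> \<epsilon> :: real and n k :: nat
  defines "x \<equiv> real n"
  assumes x: "0 < x" and k: "2 * real k \<le> x" "real k \<le> c * x powr (2 * \<beta>)"
    and B: "0 \<le> B" "B \<le> x powr (1 - \<epsilon> / 2)"
  shows "real k ^ 2 / real (n - k + 1) * B \<le> 2 * c\<^sup>2 * x powr (4 * \<beta> - \<epsilon> / 2)"
proof -
  have "x / 2 \<le> real (n - k + 1)" using k by (simp add: x_def of_nat_diff)
  then have "real k ^ 2 / real (n - k + 1) * B \<le> real k ^ 2 / (x / 2) * x powr (1 - \<epsilon> / 2)"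
    using B x by (intro mult_mono divide_left_mono) auto
  also have "\<dots> = 2 * real k ^ 2 * (x powr (1 - \<epsilon> / 2) / x)"
    using x by (simp add: field_simps)
  also have "x powr (1 - \<epsilon> / 2) / x = x powr (- \<epsilon> / 2)"
    using x by (simp add: powr_diff powr_minus_divide)
  also have "2 * real k ^ 2 * x powr (- \<epsilon> / 2) \<le> 2 * (c * x powr (2 * \<beta>))\<^sup>2 * x powr (- \<epsilon> / 2)"
    using k by (intro mult_right_mono mult_left_mono power_mono) auto
  also have "\<dots> = 2 * c\<^sup>2 * x powr (4 * \<beta> - \<epsilon> / 2)"
    using x by (simp add: power_mult_distrib powr_power algebra_simps flip: powr_add)
  finally show ?thesis .
qed

text \<open>The exponent \<open>\<beta>\<close> is chosen so that \<open>(a + 10) \<beta> = \<epsilon>/2\<close>, which makes the final bound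
  \<open>4 c\<^sup>5 x\<^bsup>(a+10)\<beta> - \<epsilon>\<^esup>\<close> on \<open>delta\<close> equal to \<open>4 c\<^sup>5 x\<^bsup>-\<epsilon>/2\<^esup>\<close>.\<close>

lemma delta_lt_one:
  fixes p \<epsilon> :: real and n d k :: nat
  assumes eps: "0 < \<epsilon>"
  defines "x \<equiv> real n"
  defines "\<beta> \<equiv> \<epsilon> / (2 * (real ((d + 1) choose 2) + 10))"
  defines "c \<equiv> 3 / \<beta>"
  assumes p: "0 < p" "p < 1" "1 / p \<le> x powr \<beta>" and x: "1 < x"
    and k: "2 \<le> k" "2 * real k \<le> x" "real k \<le> c * x powr (2 * \<beta>)"
      "(1 / (1 - p)) powr ((real k - 1) / 2) \<le> x powr (1 - \<epsilon> / 2)"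
    and H5: "2 * c\<^sup>2 \<le> x powr (\<epsilon> / 2 - 4 * \<beta>)"
    and H6: "4 * c ^ 5 < x powr (\<epsilon> / 2)"
  shows "delta n k p d < 1"
proof -
  define a where "a = (d + 1) choose 2"
  define \<rho> where "\<rho> = real k ^ 2 / real (n - k + 1) * (1 / (1 - p)) powr ((real k - 1) / 2)"
  have x0: "0 < x" using x by simp
  have c0: "0 < c" using eps by (simp add: c_def \<beta>_def)
  have "k \<le> n" using k(2) unfolding x_def by linarith
  have \<rho>_le: "\<rho> \<le> 2 * c\<^sup>2 * x powr (4 * \<beta> - \<epsilon> / 2)"
    unfolding \<rho>_def x_def using overlap_ratio_le x0 k by (simp add: x_def)
  also have "\<dots> \<le> x powr (\<epsilon> / 2 - 4 * \<beta>) * x powr (4 * \<beta> - \<epsilon> / 2)"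
    using H5 by (intro mult_right_mono) auto
  also have "\<dots> = 1" using x0 by (simp flip: powr_add)
  finally have "\<rho> \<le> 1" .
  have "1 / p ^ a = (1 / p) ^ a" by (simp add: power_one_over)
  also have "\<dots> \<le> (x powr \<beta>) ^ a" using p by (intro power_mono) auto
  also have "\<dots> = x powr (real a * \<beta>)" using x0 by (simp add: powr_power)
  finally have "1 / p ^ a \<le> x powr (real a * \<beta>)" .
  have "delta n k p d \<le> real k * \<rho>\<^sup>2 * (1 / p ^ a)"
    using delta_le[OF p(1,2) k(1) \<open>k \<le> n\<close>, of d] \<open>\<rho> \<le> 1\<close> by (simp add: \<rho>_def a_def)
  also have "\<dots> \<le> (c * x powr (2 * \<beta>)) * (2 * c\<^sup>2 * x powr (4 * \<beta> - \<epsilon> / 2))\<^sup>2 * x powr (real a * \<beta>)"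
    using k \<rho>_le \<open>1 / p ^ a \<le> x powr (real a * \<beta>)\<close> p c0
    by (intro mult_mono power_mono) (auto simp: \<rho>_def)
  also have "\<dots> = 4 * c ^ 5 * x powr ((real a + 10) * \<beta> - \<epsilon>)"
    using x0 by (simp add: power_mult_distrib powr_power power2_eq_square algebra_simps
        numeral_eq_Suc flip: powr_add)
  also have "(real a + 10) * \<beta> - \<epsilon> = - \<epsilon> / 2"
    by (simp add: \<beta>_def a_def field_simps)
  also have "4 * c ^ 5 * x powr (- \<epsilon> / 2) < x powr (\<epsilon> / 2) * x powr (- \<epsilon> / 2)"
    using H6 x0 by (intro mult_strict_right_mono) auto
  also have "\<dots> = 1" using x0 by (simp flip: powr_add)
  finally show ?thesis .
qed

lemma u_lower_bound_at:
  fixes p \<epsilon> :: real and n d :: nat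
  assumes eps: "0 < \<epsilon>" "\<epsilon> \<le> 1" and d: "d \<ge> 1" and p: "p \<le> 1"
  defines "x \<equiv> real n"
  defines "\<beta> \<equiv> \<epsilon> / (2 * (real ((d + 1) choose 2) + 10))"
  defines "c \<equiv> 3 / \<beta>"
  assumes p_large: "1 \<le> p * x powr \<beta>" and q_large: "1 \<le> (1 - p) * ln x"
    and H3: "16 * (real d + 1)\<^sup>2 \<le> ln x"
    and H4: "2 * c \<le> x powr (1 - 2 * \<beta>)"
    and H5: "2 * c\<^sup>2 \<le> x powr (\<epsilon> / 2 - 4 * \<beta>)"
    and H6: "4 * c ^ 5 < x powr (\<epsilon> / 2)"
  shows "0 \<le> log (1 / (1 - p)) (x * p) \<and> (2 - \<epsilon>) * log (1 / (1 - p)) (x * p) \<le> real (u d n p)"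
proof -
  have \<beta>: "0 < \<beta>" "\<beta> \<le> 1 / 20" using eps by (auto simp: \<beta>_def field_simps)
  have "\<beta> \<le> 1 / 2" "0 \<le> x" using \<beta> by (simp_all add: x_def)
  note regime = gnp_regime[OF \<beta>(1) this p p_large q_large]
  have x: "1 < x" and p: "0 < p" "p < 1" "1 / p \<le> x powr \<beta>" and np: "x powr (1 / 2) \<le> x * p"
    using regime by auto
  have "1 \<le> x * p" using np ge_one_powr_ge_zero[of x "1 / 2"] x by linarith
  define L where "L = log (1 / (1 - p)) (x * p)"
  have "real d + 1 = sqrt (16 * (real d + 1)\<^sup>2) / 4" by (simp add: real_sqrt_mult)
  also have "\<dots> \<le> sqrt (ln x) / 4" using H3 by simp
  also have "\<dots> \<le> L" unfolding L_def using log_np_lower[OF x p(1) np q_large] .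
  finally have L_ge: "real d + 1 \<le> L" .
  have "L \<le> x powr (2 * \<beta>) / \<beta>"
    unfolding L_def using log_np_upper[OF \<beta>(1) x p \<open>1 \<le> x * p\<close>] .
  define k where "k = nat \<lceil>(2 - \<epsilon>) * L\<rceil>"
  have k_ge: "(2 - \<epsilon>) * L \<le> real k" and k_half: "(real k - 1) / 2 \<le> (1 - \<epsilon> / 2) * L"
    and k_le: "real k \<le> c * x powr (2 * \<beta>)"
    using planted_size_bounds[OF eps _ _ x _ \<open>L \<le> x powr (2 * \<beta>) / \<beta>\<close>] \<beta> L_ge
    unfolding k_def c_def by auto
  have "L \<le> (2 - \<epsilon>) * L" using L_ge eps by (simp add: mult_le_cancel_right1)
  then have k: "d + 1 \<le> k" "2 \<le> k" using k_ge L_ge d by linarith+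
  have "2 * real k \<le> 2 * c * x powr (2 * \<beta>)" using k_le by simp
  also have "\<dots> \<le> x powr (1 - 2 * \<beta>) * x powr (2 * \<beta>)" using H4 by (intro mult_right_mono) auto
  also have "\<dots> = x" using x by (simp flip: powr_add)
  finally have "2 * real k \<le> x" .
  have B_le: "(1 / (1 - p)) powr ((real k - 1) / 2) \<le> x powr (1 - \<epsilon> / 2)"
    using p x \<open>1 \<le> x * p\<close> eps k_half unfolding L_def
    by (intro powr_le_powr_log) (auto simp: mult_left_le mult.commute)
  have "k \<le> n" using \<open>2 * real k \<le> x\<close> unfolding x_def by linarith
  moreover have "delta n k p d < 1"
    using delta_lt_one[of \<epsilon> p n d k] eps(1) p x k(2) \<open>2 * real k \<le> x\<close> k_le B_le H5 H6
    unfolding x_def \<beta>_def c_def by blast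
  ultimately have "k \<le> u d n p"
    using le_u_if_prob_gt_half prob_u_event_gt_half[OF p(1,2) d k(1)] k by simp
  then show ?thesis using k_ge L_ge by (simp add: L_def)
qed

lemma eventually_gt_real_powr:
  fixes C \<gamma> :: real
  assumes "0 < \<gamma>"
  shows "eventually (\<lambda>n. C < real n powr \<gamma>) sequentially"
  using filterlim_compose[OF real_powr_at_top[OF assms] filterlim_real_sequentially]
  by (simp add: filterlim_at_top_dense)

lemma eventually_u_lower_bound:
  fixes p :: "nat \<Rightarrow> real" and \<epsilon> :: real
  assumes p_prob: "\<And>n. 0 \<le> p n \<and> p n \<le> 1"
    and p_large: "\<And>\<alpha>::real. \<alpha> > 0 \<Longrightarrow> filterlim (\<lambda>n. p n * real n powr \<alpha>) at_top sequentially"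
    and q_large: "filterlim (\<lambda>n. (1 - p n) * ln (real n)) at_top sequentially"
    and d: "d \<ge> 1" and eps: "0 < \<epsilon>" "\<epsilon> \<le> 1"
  shows "eventually (\<lambda>n. 0 \<le> log (1 / (1 - p n)) (real n * p n) \<and>
      (2 - \<epsilon>) * log (1 / (1 - p n)) (real n * p n) \<le> real (u d n (p n))) sequentially"
proof -
  define \<beta> where "\<beta> = \<epsilon> / (2 * (real ((d + 1) choose 2) + 10))"
  define c where "c = 3 / \<beta>"
  have \<beta>: "0 < \<beta>" "\<beta> \<le> \<epsilon> / 20" using eps by (auto simp: \<beta>_def field_simps)
  have "filterlim (\<lambda>n. ln (real n)) at_top sequentially"
    by (rule filterlim_compose[OF ln_at_top filterlim_real_sequentially])
  then have "eventually (\<lambda>n. 16 * (real d + 1)\<^sup>2 \<le> ln (real n)) sequentially"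
    by (simp add: filterlim_at_top)
  moreover have "eventually (\<lambda>n. 1 \<le> p n * real n powr \<beta>) sequentially"
    using p_large[OF \<beta>(1)] by (simp add: filterlim_at_top)
  moreover have "eventually (\<lambda>n. 1 \<le> (1 - p n) * ln (real n)) sequentially"
    using q_large by (simp add: filterlim_at_top)
  moreover have "eventually (\<lambda>n. 2 * c < real n powr (1 - 2 * \<beta>)) sequentially"
    using eps \<beta> by (intro eventually_gt_real_powr) auto
  moreover have "eventually (\<lambda>n. 2 * c\<^sup>2 < real n powr (\<epsilon> / 2 - 4 * \<beta>)) sequentially"
    using eps \<beta> by (intro eventually_gt_real_powr) auto
  moreover have "eventually (\<lambda>n. 4 * c ^ 5 < real n powr (\<epsilon> / 2)) sequentially"
    using eps by (intro eventually_gt_real_powr) auto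
  ultimately show ?thesis
  proof eventually_elim
    case (elim n)
    then show ?case
      using u_lower_bound_at[OF eps d, of "p n" n] p_prob[of n]
      unfolding \<beta>_def[symmetric] c_def[symmetric] by (simp add: mult.commute less_imp_le)
  qed
qed

theorem theorem24:
  fixes p :: "nat \<Rightarrow> real"
  assumes p_prob: "\<And>n. 0 \<le> p n \<and> p n \<le> 1"
    and p_large: "\<And>\<alpha>::real. \<alpha> > 0 \<Longrightarrow> filterlim (\<lambda>n. p n * real n powr \<alpha>) at_top sequentially"
    and q_large: "filterlim (\<lambda>n. (1 - p n) * ln (real n)) at_top sequentially"
  shows "\<forall>d::nat. d \<ge> 1 \<longrightarrow> (\<forall>\<epsilon>::real. \<epsilon> > 0 \<longrightarrow> (\<exists>n0. \<forall>n\<ge>n0.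
           real (u d n (p n)) \<ge> (2 - \<epsilon>) * log (1 / (1 - p n)) (real n * p n)))"
proof (intro allI impI)
  fix d :: nat and \<epsilon> :: real
  assume "d \<ge> 1" "\<epsilon> > 0"
  \<comment> \<open>The bound only gets weaker as \<open>\<epsilon>\<close> grows, so it suffices to treat \<open>\<epsilon> \<le> 1\<close>.\<close>
  define e where "e = min \<epsilon> 1"
  have "0 < e" "e \<le> 1" "e \<le> \<epsilon>" using \<open>\<epsilon> > 0\<close> by (auto simp: e_def)
  have "eventually (\<lambda>n. 0 \<le> log (1 / (1 - p n)) (real n * p n) \<and>
      (2 - e) * log (1 / (1 - p n)) (real n * p n) \<le> real (u d n (p n))) sequentially"
    using eventually_u_lower_bound[OF assms \<open>d \<ge> 1\<close> \<open>0 < e\<close> \<open>e \<le> 1\<close>] .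
  then have "eventually (\<lambda>n. (2 - \<epsilon>) * log (1 / (1 - p n)) (real n * p n) \<le> real (u d n (p n))) sequentially"
    by eventually_elim (use \<open>e \<le> \<epsilon>\<close> in \<open>smt (verit) mult_right_mono\<close>)
  then show "\<exists>n0. \<forall>n\<ge>n0. real (u d n (p n)) \<ge> (2 - \<epsilon>) * log (1 / (1 - p n)) (real n * p n)"
    by (simp add: eventually_sequentially)
qed

end
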